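(* Let $d\ge2$, $b:=2^d$, $N\in\mathbb{N}$, $L:=\min\{\ell\ge0:b^\ell\ge N\}$, and assume $L\ge3$. Let $0\le\ell\le L-3$ and $u\in\{0,\dots,b-1\}^\ell$, write $C_u=\prod_{j=1}^d[A_j,A_j+2^{-\ell})$, and let $R_u=\prod_{j=1}^d[a_j,b_j)$ be a half-open rectangle with $\lambda_d(R_u)=M(u)/N$ and \[ |a_j-A_j|\le S_\ell,\qquad |b_j-(A_j+2^{-\ell})|\le S_\ell\qquad(1\le j\le d). \] Then there exist half-open rectangles $\{R_{u\ast v}\}_{v=0}^{b-1}$ such that: (i) they partition $R_u$ up to Lebesgue-null sets; (ii) $\lambda_d(R_{u\ast v})=M(u\ast v)/N$ for every $v$; (iii) writing $C_{u\ast v}=\prod_{j=1}^d[A_{u\ast v,j},A_{u\ast v,j}+2^{-(\ell+1)})$ and $R_{u\ast v}=\prod_{j=1}^d[a_{u\ast v,j},b_{u\ast v,j})$, one has $|a_{u\ast v,j}-A_{u\ast v,j}|\le S_{\ell+1}$ and $|b_{u\ast v,j}-(A_{u\ast v,j}+2^{-(\ell+1)})|\le S_{\ell+1}$ for all $1\le j\le d$.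
   Context: $\lambda_d$ is Lebesgue measure. $u\ast v$ denotes the word $u$ followed by the digit $v$. For $0\le\ell\le L-3$: $\Delta_\ell:=\frac{2^{2d-3}}{N}2^{\ell(d-1)}$, $S_0:=0$, $S_{\ell+1}:=S_\ell+\Delta_\ell$. $M(w):=\#\{1\le n\le N:x_n\in C_w\}$, where: for $a\in\{0,\dots,b-1\}$, $a=\sum_{j=1}^d\varepsilon_j(a)2^{j-1}$ with $\varepsilon_j(a)\in\{0,1\}$; for $m\ge0$, $m=\sum_{k\ge0}a_k(m)b^k$ in base $b$; $x_n:=\bigl(\sum_{k\ge0}\varepsilon_1(a_k(n-1))2^{-(k+1)},\dots,\sum_{k\ge0}\varepsilon_d(a_k(n-1))2^{-(k+1)}\bigr)$; and for a word $w=(w_0,\dots,w_{\ell-1})$, $C_w:=\prod_{j=1}^d\bigl[\sum_{k=0}^{\ell-1}\varepsilon_j(w_k)2^{-(k+1)},\sum_{k=0}^{\ell-1}\varepsilon_j(w_k)2^{-(k+1)}+2^{-\ell}\bigr)$, with $C_\varnothing=[0,1)^d$. *)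

theory Defs
  imports "HOL-Analysis.Analysis"
begin

definition base :: "nat \<Rightarrow> nat" where
  "base d = 2 ^ d"

definition Lnum :: "nat \<Rightarrow> nat \<Rightarrow> nat" where
  "Lnum d N = (LEAST l. base d ^ l \<ge> N)"

definition eps :: "nat \<Rightarrow> nat \<Rightarrow> nat" where
  "eps j a = (a div 2 ^ (j - 1)) mod 2"

definition bdigit :: "nat \<Rightarrow> nat \<Rightarrow> nat \<Rightarrow> nat" where
  "bdigit d k m = (m div base d ^ k) mod base d"

definition pt :: "nat \<Rightarrow> nat \<Rightarrow> (nat \<Rightarrow> real)" where
  "pt d n = (\<lambda>j\<in>{1..d}. \<Sum>k. real (eps j (bdigit d k (n - 1))) / 2 ^ (k + 1))"

definition corner :: "nat list \<Rightarrow> nat \<Rightarrow> real" where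
  "corner w j = (\<Sum>k<length w. real (eps j (w ! k)) / 2 ^ (k + 1))"

definition cube :: "nat \<Rightarrow> nat list \<Rightarrow> (nat \<Rightarrow> real) set" where
  "cube d w = PiE {1..d} (\<lambda>j. {corner w j ..< corner w j + 1 / 2 ^ length w})"

definition rect :: "nat \<Rightarrow> (nat \<Rightarrow> real) \<Rightarrow> (nat \<Rightarrow> real) \<Rightarrow> (nat \<Rightarrow> real) set" where
  "rect d a b = PiE {1..d} (\<lambda>j. {a j ..< b j})"

definition Mcount :: "nat \<Rightarrow> nat \<Rightarrow> nat list \<Rightarrow> nat" where
  "Mcount d N w = card {n \<in> {1..N}. pt d n \<in> cube d w}"

definition lebd :: "nat \<Rightarrow> (nat \<Rightarrow> real) measure" where
  "lebd d = PiM {1..d} (\<lambda>_. lborel)"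

definition Delta :: "nat \<Rightarrow> nat \<Rightarrow> nat \<Rightarrow> real" where
  "Delta d N l = 2 ^ (2 * d - 3) / real N * 2 ^ (l * (d - 1))"

definition Ssum :: "nat \<Rightarrow> nat \<Rightarrow> nat \<Rightarrow> real" where
  "Ssum d N l = (\<Sum>i<l. Delta d N i)"

end

theory Submission
  imports Defs
begin

text \<open>The children are obtained by a k-d tree split of \<open>R_u\<close>. In direction \<open>j\<close>, the digits
  \<open>v\<close> agreeing in their first \<open>j - 1\<close> binary digits form a class, and the slab of the class is cut
  at the point dividing \<open>[a_j, b_j)\<close> in the proportion of the total counts \<open>M(u*w)\<close> of its
  members \<open>w\<close> with \<open>j\<close>-th binary digit 0 and 1. The side lengths of \<open>R_{u*v}\<close> then telescope
  to \<open>M(u*v)/M(u)\<close> times those of \<open>R_u\<close>, and two distinct digits are separated in the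
  direction of their first differing binary digit.

  Since \<open>x_{m+1}\<close> lies in \<open>C_w\<close> exactly when the first base-\<open>b\<close> digits of \<open>m\<close> spell \<open>w\<close>,
  each \<open>M(u*v)\<close> counts a residue class modulo \<open>b^(l+1)\<close> in \<open>{0..N-1}\<close> and lies in \<open>[q, q+1]\<close>
  with \<open>q = N div b^(l+1)\<close>. Pairing the two halves of a class by a bit flip shows that every
  cut proportion is within \<open>1/(4q)\<close> of \<open>1/2\<close>, so a cut moves at most \<open>\<Delta>_l\<close> away from the
  dyadic midpoint.\<close>

lemma rect_sets [measurable]: "rect d a b \<in> sets (lebd d)"
  unfolding rect_def lebd_def by (intro sets_PiM_I_finite) auto

lemma emeasure_rect:
  assumes "\<forall>j\<in>{1..d}. a j \<le> b j"
  shows "emeasure (lebd d) (rect d a b) = ennreal (\<Prod>j\<in>{1..d}. b j - a j)"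
proof -
  interpret product_sigma_finite "\<lambda>_. lborel :: real measure" by standard
  have "emeasure (lebd d) (rect d a b) = (\<Prod>j\<in>{1..d}. emeasure lborel {a j..<b j})"
    unfolding rect_def lebd_def by (intro emeasure_PiM) auto
  also have "\<dots> = ennreal (\<Prod>j\<in>{1..d}. b j - a j)"
    using assms by (simp add: emeasure_lborel_Ico) (intro prod_ennreal, auto)
  finally show ?thesis .
qed

lemma measure_rect:
  assumes "\<forall>j\<in>{1..d}. a j \<le> b j"
  shows "measure (lebd d) (rect d a b) = (\<Prod>j\<in>{1..d}. b j - a j)"
proof -
  have "0 \<le> (\<Prod>j\<in>{1..d}. b j - a j)" using assms by (intro prod_nonneg) auto
  then show ?thesis using emeasure_rect[OF assms] by (simp add: measure_def)
qed

lemma rect_mono: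
  assumes "\<forall>j\<in>{1..d}. a j \<le> a' j \<and> b' j \<le> b j"
  shows "rect d a' b' \<subseteq> rect d a b"
  unfolding rect_def using assms by (intro PiE_mono) auto

lemma rect_disjoint:
  assumes "j \<in> {1..d}" "b j \<le> a' j"
  shows "rect d a b \<inter> rect d a' b' = {}"
proof -
  have "x j \<notin> {a j..<b j} \<inter> {a' j..<b' j}" for x :: "nat \<Rightarrow> real"
    using assms(2) by auto
  then show ?thesis using assms(1) unfolding rect_def by (blast dest: PiE_mem)
qed

lemma null_sets_Diff_UN_if_emeasure_eq:
  assumes "finite I" "disjoint_family_on F I" "F ` I \<subseteq> sets M" "A \<in> sets M"
    and "(\<Union>i\<in>I. F i) \<subseteq> A" "emeasure M A = (\<Sum>i\<in>I. emeasure M (F i))" "emeasure M A < \<infinity>"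
  shows "A - (\<Union>i\<in>I. F i) \<in> null_sets M"
proof -
  have UN: "(\<Union>i\<in>I. F i) \<in> sets M" using assms(1,3) by blast
  have "emeasure M (\<Union>i\<in>I. F i) = emeasure M A"
    using sum_emeasure[of F I M] assms(1-3,6) by auto
  then show ?thesis
    using UN assms(4,5,7) by (auto intro!: null_setsI simp: emeasure_Diff)
qed

lemma eps_le_1: "eps j a \<le> 1"
  unfolding eps_def by simp

lemma eps_eq_bit: "eps j a = of_bool (bit a (j - 1))"
  unfolding eps_def by (simp add: bit_iff_odd odd_iff_mod_2_eq_one)

lemma eps_eq_imp_eq:
  fixes a a' :: nat
  assumes "a < 2 ^ d" "a' < 2 ^ d" "\<forall>j\<in>{1..d}. eps j a = eps j a'"
  shows "a = a'"
proof (rule bit_eqI)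
  fix n
  show "bit a n = bit a' n"
  proof (cases "n < d")
    case True
    then show ?thesis
      using assms(3)[rule_format, of "Suc n"] by (simp add: eps_eq_bit of_bool_eq_iff)
  next
    case False
    then show ?thesis using assms(1,2) bit_take_bit_iff take_bit_nat_eq_self_iff by metis
  qed
qed

lemma eps_flip_bit:
  assumes "i \<ge> 1"
  shows "eps i (flip_bit n w) = (if i = Suc n then 1 - eps i w else eps i w)"
  using assms by (auto simp: eps_eq_bit bit_flip_bit_iff)

lemma flip_bit_less_power:
  assumes "j \<in> {1..d}" "w < 2 ^ d"
  shows "flip_bit (j - 1) w < (2::nat) ^ d"
  using assms take_bit_flip_bit_eq[of d "j - 1" w]
  by (metis take_bit_nat_eq_self_iff atLeastAtMost_iff diff_less less_le_trans not_le zero_less_one)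

lemma flip_bit_flip_bit: "flip_bit n (flip_bit n w) = (w :: nat)"
  by (rule bit_eqI) (auto simp: bit_flip_bit_iff)

lemma dyadic_sum_bounds:
  assumes "\<forall>k. e k \<le> (1::nat)"
  shows "0 \<le> (\<Sum>k<K. real (e k) / 2 ^ (k + 1))" "(\<Sum>k<K. real (e k) / 2 ^ (k + 1)) \<le> 1 - 1 / 2 ^ K"
proof -
  show "0 \<le> (\<Sum>k<K. real (e k) / 2 ^ (k + 1))" by (intro sum_nonneg) auto
  show "(\<Sum>k<K. real (e k) / 2 ^ (k + 1)) \<le> 1 - 1 / 2 ^ K"
  proof (induction K)
    case (Suc K)
    have "real (e K) / 2 ^ (K + 1) \<le> 1 / 2 ^ (K + 1)"
      using assms by (simp add: divide_right_mono)
    then show ?case using Suc by simp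
  qed simp
qed

lemma dyadic_prefix_iff:
  fixes e f :: "nat \<Rightarrow> nat"
  assumes "\<forall>k. e k \<le> 1" "\<forall>k. f k \<le> 1" "l \<le> K"
  shows "((\<Sum>k<l. real (f k) / 2 ^ (k + 1)) \<le> (\<Sum>k<K. real (e k) / 2 ^ (k + 1))
          \<and> (\<Sum>k<K. real (e k) / 2 ^ (k + 1)) < (\<Sum>k<l. real (f k) / 2 ^ (k + 1)) + 1 / 2 ^ l)
         \<longleftrightarrow> (\<forall>k<l. e k = f k)"
  using assms
proof (induction l arbitrary: e f K)
  case 0
  have "(0::real) < 1 / 2 ^ K" by simp
  then have "(\<Sum>k<K. real (e k) / 2 ^ (k + 1)) < 1"
    using dyadic_sum_bounds(2)[OF 0(1), of K] by linarith
  then show ?case using dyadic_sum_bounds(1)[of e K] 0 by simp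
next
  case (Suc l)
  then obtain K' where K': "K = Suc K'" "l \<le> K'" by (cases K) auto
  define s where "s = (\<Sum>k<K'. real (e (Suc k)) / 2 ^ (k + 1))"
  define c where "c = (\<Sum>k<l. real (f (Suc k)) / 2 ^ (k + 1))"
  have shift_e: "(\<Sum>k<K. real (e k) / 2 ^ (k + 1)) = real (e 0) / 2 + s / 2"
    unfolding K'(1) s_def by (subst sum.lessThan_Suc_shift) (simp add: sum_divide_distrib)
  have shift_f: "(\<Sum>k<Suc l. real (f k) / 2 ^ (k + 1)) = real (f 0) / 2 + c / 2"
    unfolding c_def by (subst sum.lessThan_Suc_shift) (simp add: sum_divide_distrib)
  have IH: "(c \<le> s \<and> s < c + 1 / 2 ^ l) \<longleftrightarrow> (\<forall>k<l. e (Suc k) = f (Suc k))"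
    unfolding s_def c_def using Suc.prems K' by (intro Suc.IH) auto
  have "0 \<le> s" "s \<le> 1 - 1 / 2 ^ K'"
    unfolding s_def using dyadic_sum_bounds[of "\<lambda>k. e (Suc k)" K'] Suc.prems by auto
  moreover have "(0::real) < 1 / 2 ^ K'" by simp
  ultimately have s: "0 \<le> s" "s < 1" by linarith+
  have c: "0 \<le> c" "c + 1 / 2 ^ l \<le> 1"
    unfolding c_def using dyadic_sum_bounds[of "\<lambda>k. f (Suc k)" l] Suc.prems by auto
  have "e 0 \<in> {0, 1}" "f 0 \<in> {0, 1}"
    using Suc.prems by (auto simp: le_Suc_eq)
  then have "(real (f 0) / 2 + c / 2 \<le> real (e 0) / 2 + s / 2
               \<and> real (e 0) / 2 + s / 2 < real (f 0) / 2 + c / 2 + 1 / 2 ^ Suc l)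
             \<longleftrightarrow> e 0 = f 0 \<and> c \<le> s \<and> s < c + 1 / 2 ^ l"
    using s c by (elim insertE) auto
  then show ?case
    unfolding shift_e shift_f IH by (auto simp: less_Suc_eq_0_disj)
qed

lemma base_ge_2: "d \<ge> 1 \<Longrightarrow> base d \<ge> 2"
  unfolding base_def using power_increasing[of 1 d "2::nat"] by simp

lemma bdigit_less_base: "d \<ge> 1 \<Longrightarrow> bdigit d k m < base d"
  unfolding bdigit_def using base_ge_2[of d] by simp

lemma bdigit_eq_0:
  assumes "d \<ge> 1" "m < base d ^ K" "K \<le> k"
  shows "bdigit d k m = 0"
proof -
  have "base d ^ K \<le> base d ^ k" using assms base_ge_2[of d] by (intro power_increasing) auto
  then show ?thesis using assms unfolding bdigit_def by simp
qed

lemma pt_eq_finite_sum: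
  assumes "d \<ge> 1" "j \<in> {1..d}" "m < base d ^ K"
  shows "pt d (Suc m) j = (\<Sum>k<K. real (eps j (bdigit d k m)) / 2 ^ (k + 1))"
proof -
  have "(\<Sum>k. real (eps j (bdigit d k m)) / 2 ^ (k + 1))
      = (\<Sum>k<K. real (eps j (bdigit d k m)) / 2 ^ (k + 1))"
    by (rule suminf_finite) (use bdigit_eq_0[OF assms(1,3)] in \<open>auto simp: eps_def\<close>)
  then show ?thesis using assms(2) unfolding pt_def by simp
qed

lemma pt_in_cube_iff:
  assumes "d \<ge> 1" "\<forall>i<length w. w ! i < base d"
  shows "pt d (Suc m) \<in> cube d w \<longleftrightarrow> (\<forall>k<length w. bdigit d k m = w ! k)"
proof -
  define K where "K = m + length w"
  have "m < 2 ^ m" by (rule less_exp)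
  also have "\<dots> \<le> base d ^ m" using base_ge_2[OF assms(1)] by (intro power_mono) auto
  also have "\<dots> \<le> base d ^ K"
    using base_ge_2[OF assms(1)] by (intro power_increasing) (auto simp: K_def)
  finally have mK: "m < base d ^ K" .
  have "pt d (Suc m) \<in> cube d w
        \<longleftrightarrow> (\<forall>j\<in>{1..d}. pt d (Suc m) j \<in> {corner w j ..< corner w j + 1 / 2 ^ length w})"
    unfolding cube_def pt_def by (auto simp: PiE_iff)
  also have "\<dots> \<longleftrightarrow> (\<forall>j\<in>{1..d}. \<forall>k<length w. eps j (bdigit d k m) = eps j (w ! k))"
  proof (intro ball_cong refl)
    fix j assume j: "j \<in> {1..d}"
    show "pt d (Suc m) j \<in> {corner w j ..< corner w j + 1 / 2 ^ length w}
          \<longleftrightarrow> (\<forall>k<length w. eps j (bdigit d k m) = eps j (w ! k))"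
      unfolding atLeastLessThan_iff corner_def pt_eq_finite_sum[OF assms(1) j mK]
      by (intro dyadic_prefix_iff) (auto simp: eps_le_1[unfolded One_nat_def] K_def)
  qed
  also have "\<dots> \<longleftrightarrow> (\<forall>k<length w. bdigit d k m = w ! k)"
    using eps_eq_imp_eq[of "bdigit d k m" d "w ! k" for k] bdigit_less_base[OF assms(1)] assms(2)
    unfolding base_def by auto
  finally show ?thesis .
qed

lemma horner_sum_less_power:
  fixes B :: nat
  assumes "\<forall>x\<in>set w. x < B"
  shows "horner_sum (\<lambda>x. x) B w < B ^ length w"
  using assms
proof (induction w)
  case (Cons x w)
  then have "x + B * horner_sum (\<lambda>x. x) B w < B + B * horner_sum (\<lambda>x. x) B w" by simp
  also have "\<dots> = B * (horner_sum (\<lambda>x. x) B w + 1)" by simp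
  also have "\<dots> \<le> B * B ^ length w" using Cons by (intro mult_le_mono2) simp
  finally show ?case by simp
qed simp

lemma digit_add_mult_eq_iff:
  fixes r r' B :: nat
  assumes "r < B" "r' < B"
  shows "r + B * y = r' + B * t \<longleftrightarrow> r = r' \<and> y = t"
proof
  assume eq: "r + B * y = r' + B * t"
  have "(r + B * y) mod B = r" "(r' + B * t) mod B = r'" using assms by simp_all
  moreover have "(r + B * y) div B = y" "(r' + B * t) div B = t" using assms by simp_all
  ultimately show "r = r' \<and> y = t" using eq by metis
qed simp

lemma bdigit_0: "bdigit d 0 m = m mod base d"
  unfolding bdigit_def by simp

lemma bdigit_Suc: "bdigit d (Suc k) m = bdigit d k (m div base d)"
  unfolding bdigit_def by (simp add: div_mult2_eq)

lemma bdigits_prefix_iff_mod: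
  assumes "d \<ge> 1" "\<forall>x\<in>set w. x < base d"
  shows "(\<forall>k<length w. bdigit d k m = w ! k)
         \<longleftrightarrow> m mod base d ^ length w = horner_sum (\<lambda>x. x) (base d) w"
  using assms(2)
proof (induction w arbitrary: m)
  case (Cons x w)
  let ?B = "base d"
  have B: "?B > 0" using base_ge_2[OF assms(1)] by simp
  have "(\<forall>k<length (x # w). bdigit d k m = (x # w) ! k)
        \<longleftrightarrow> m mod ?B = x \<and> (\<forall>k<length w. bdigit d k (m div ?B) = w ! k)"
    by (auto simp: less_Suc_eq_0_disj bdigit_0 bdigit_Suc)
  also have "\<dots> \<longleftrightarrow> m mod ?B = x \<and> (m div ?B) mod ?B ^ length w = horner_sum (\<lambda>x. x) ?B w"
    using Cons by simp
  also have "\<dots> \<longleftrightarrow> m mod ?B + ?B * ((m div ?B) mod ?B ^ length w) = x + ?B * horner_sum (\<lambda>x. x) ?B w"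
    using Cons.prems B by (simp add: digit_add_mult_eq_iff)
  also have "m mod ?B + ?B * ((m div ?B) mod ?B ^ length w) = m mod ?B ^ length (x # w)"
    by (simp add: mod_mult2_eq)
  finally show ?case by simp
qed simp

lemma card_residue_class_bounds:
  fixes P r N :: nat
  assumes "r < P"
  shows "N div P \<le> card {m\<in>{..<N}. m mod P = r}" "card {m\<in>{..<N}. m mod P = r} \<le> N div P + 1"
proof -
  have P: "P > 0" using assms by simp
  define T where "T = {t. r + P * t < N}"
  have class_eq: "{m\<in>{..<N}. m mod P = r} = (\<lambda>t. r + P * t) ` T"
  proof (intro equalityI subsetI)
    fix m assume m: "m \<in> {m\<in>{..<N}. m mod P = r}"
    then have "m = r + P * (m div P)" using mod_mult_div_eq[of m P] by simp
    moreover have "m div P \<in> T" using m \<open>m = r + P * (m div P)\<close> unfolding T_def by simp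
    ultimately show "m \<in> (\<lambda>t. r + P * t) ` T" by (rule image_eqI)
  next
    fix m assume "m \<in> (\<lambda>t. r + P * t) ` T"
    then show "m \<in> {m\<in>{..<N}. m mod P = r}" using assms unfolding T_def by auto
  qed
  have inj: "inj_on (\<lambda>t. r + P * t) T" using P by (auto simp: inj_on_def)
  have lower: "{..<N div P} \<subseteq> T"
  proof
    fix t assume "t \<in> {..<N div P}"
    then have "Suc t * P \<le> N" using less_eq_div_iff_mult_less_eq[OF P, of "Suc t" N] by simp
    then show "t \<in> T" using assms unfolding T_def by (simp add: mult.commute)
  qed
  have upper: "T \<subseteq> {..N div P}"
  proof
    fix t assume "t \<in> T"
    then have "P * t \<le> N" unfolding T_def by simp
    then show "t \<in> {..N div P}" using less_eq_div_iff_mult_less_eq[OF P] by (simp add: mult.commute)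
  qed
  have "card {..<N div P} \<le> card T"
    using finite_subset[OF upper] lower by (intro card_mono) auto
  moreover have "card T \<le> card {..N div P}"
    using upper by (intro card_mono) auto
  ultimately show "N div P \<le> card {m\<in>{..<N}. m mod P = r}"
    "card {m\<in>{..<N}. m mod P = r} \<le> N div P + 1"
    unfolding class_eq card_image[OF inj] by simp_all
qed

lemma Mcount_eq_card:
  assumes "d \<ge> 1" "\<forall>i<length w. w ! i < base d"
  shows "Mcount d N w = card {m\<in>{..<N}. \<forall>k<length w. bdigit d k m = w ! k}"
proof -
  have "{n \<in> {1..N}. pt d n \<in> cube d w} = Suc ` {m\<in>{..<N}. \<forall>k<length w. bdigit d k m = w ! k}"
  proof (intro equalityI subsetI)
    fix n assume n: "n \<in> {n \<in> {1..N}. pt d n \<in> cube d w}"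
    then have "n = Suc (n - 1)" by simp
    with n show "n \<in> Suc ` {m\<in>{..<N}. \<forall>k<length w. bdigit d k m = w ! k}"
      using pt_in_cube_iff[OF assms, of "n - 1"] by (intro image_eqI[of _ _ "n - 1"]) auto
  qed (use pt_in_cube_iff[OF assms] in auto)
  then show ?thesis unfolding Mcount_def by (simp add: card_image)
qed

lemma Mcount_bounds:
  assumes "d \<ge> 1" "\<forall>i<length w. w ! i < base d"
  shows "N div base d ^ length w \<le> Mcount d N w" "Mcount d N w \<le> N div base d ^ length w + 1"
proof -
  have w: "\<forall>x\<in>set w. x < base d" using assms(2) by (auto simp: in_set_conv_nth)
  have "Mcount d N w = card {m\<in>{..<N}. m mod base d ^ length w = horner_sum (\<lambda>x. x) (base d) w}"
    unfolding Mcount_eq_card[OF assms] bdigits_prefix_iff_mod[OF assms(1) w] ..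
  then show "N div base d ^ length w \<le> Mcount d N w" "Mcount d N w \<le> N div base d ^ length w + 1"
    using card_residue_class_bounds[OF horner_sum_less_power[OF w]] by simp_all
qed

lemma Mcount_snoc_bounds:
  assumes "d \<ge> 1" "\<forall>i<length u. u ! i < base d" "v < base d"
  shows "N div base d ^ Suc (length u) \<le> Mcount d N (u @ [v])"
    "Mcount d N (u @ [v]) \<le> N div base d ^ Suc (length u) + 1"
  using Mcount_bounds[OF assms(1), of "u @ [v]" N] assms(2,3) by (auto simp: nth_append less_Suc_eq)

lemma Mcount_eq_sum_snoc:
  assumes "d \<ge> 1" "\<forall>i<length u. u ! i < base d"
  shows "Mcount d N u = (\<Sum>v<base d. Mcount d N (u @ [v]))"
proof -
  define D where "D w = {m\<in>{..<N}. \<forall>k<length w. bdigit d k m = w ! k}" for w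
  have snoc: "\<forall>i<length (u @ [v]). (u @ [v]) ! i < base d" if "v < base d" for v
    using assms(2) that by (auto simp: nth_append less_Suc_eq)
  have D_snoc: "D (u @ [v]) = {m \<in> D u. bdigit d (length u) m = v}" for v
    unfolding D_def by (auto simp: nth_append less_Suc_eq)
  have "D u = (\<Union>v<base d. D (u @ [v]))"
    unfolding D_snoc using bdigit_less_base[OF assms(1)] by blast
  moreover have "card (\<Union>v<base d. D (u @ [v])) = (\<Sum>v<base d. card (D (u @ [v])))"
    by (rule card_UN_disjoint) (auto simp: D_snoc D_def)
  ultimately show ?thesis
    using Mcount_eq_card[OF assms] Mcount_eq_card[OF assms(1) snoc] by (simp add: D_def)
qed

definition bit_class :: "nat \<Rightarrow> nat \<Rightarrow> nat \<Rightarrow> nat set" where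
  "bit_class d j v = {w. w < 2 ^ d \<and> (\<forall>i\<in>{1..<j}. eps i w = eps i v)}"

lemma finite_bit_class [simp]: "finite (bit_class d j v)"
  unfolding bit_class_def by auto

lemma bit_class_1: "bit_class d 1 v = {..<2 ^ d}"
  unfolding bit_class_def by auto

lemma bit_class_Suc: "j \<ge> 1 \<Longrightarrow> bit_class d (Suc j) v = {w \<in> bit_class d j v. eps j w = eps j v}"
  unfolding bit_class_def by (auto simp: less_Suc_eq)

lemma bit_class_Suc_dim: "v < 2 ^ d \<Longrightarrow> bit_class d (Suc d) v = {v}"
  unfolding bit_class_def using eps_eq_imp_eq[of _ d v] by auto

lemma self_in_bit_class: "v < 2 ^ d \<Longrightarrow> v \<in> bit_class d j v"
  unfolding bit_class_def by auto

lemma flip_bit_in_bit_class: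
  assumes "j \<in> {1..d}" "w \<in> bit_class d j v"
  shows "flip_bit (j - 1) w \<in> bit_class d j v"
  using assms flip_bit_less_power[OF assms(1)] unfolding bit_class_def by (auto simp: eps_flip_bit)

lemma bij_betw_flip_bit_bit_class:
  assumes "j \<in> {1..d}"
  shows "bij_betw (flip_bit (j - 1))
           (bit_class d j v \<inter> {w. eps j w = 0}) (bit_class d j v - {w. eps j w = 0})"
proof (rule bij_betw_byWitness[where f' = "flip_bit (j - 1)"])
  have "eps j (flip_bit (j - 1) w) = 0 \<longleftrightarrow> eps j w \<noteq> 0" for w
    using assms eps_le_1[of j w] by (auto simp: eps_flip_bit)
  then show "flip_bit (j - 1) ` (bit_class d j v \<inter> {w. eps j w = 0})
               \<subseteq> bit_class d j v - {w. eps j w = 0}"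
    and "flip_bit (j - 1) ` (bit_class d j v - {w. eps j w = 0})
               \<subseteq> bit_class d j v \<inter> {w. eps j w = 0}"
    using flip_bit_in_bit_class[OF assms] by auto
qed (simp_all add: flip_bit_flip_bit)

lemma sum_ratio_near_half:
  fixes f g :: "'a \<Rightarrow> real"
  assumes "finite A" "A \<noteq> {}" "q > 0"
    and "\<forall>x\<in>A. q \<le> f x \<and> f x \<le> q + 1" "\<forall>x\<in>A. q \<le> g x \<and> g x \<le> q + 1"
  shows "\<bar>sum f A / (sum f A + sum g A) - 1 / 2\<bar> \<le> 1 / (4 * q)"
proof -
  define n where "n = real (card A)"
  have n: "n > 0" unfolding n_def using assms(1,2) by (simp add: card_gt_0_iff)
  have "\<bar>sum f A - sum g A\<bar> \<le> (\<Sum>x\<in>A. \<bar>f x - g x\<bar>)"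
    unfolding sum_subtractf[symmetric] by (rule sum_abs)
  also have "\<dots> \<le> (\<Sum>x\<in>A. 1)" using assms(4,5) by (intro sum_mono) (fastforce simp: abs_le_iff)
  finally have diff: "\<bar>sum f A - sum g A\<bar> \<le> n" unfolding n_def by simp
  have "(\<Sum>x\<in>A. 2 * q) \<le> sum f A + sum g A"
    unfolding sum.distrib[symmetric] using assms(4,5) by (intro sum_mono) fastforce
  then have total: "2 * q * n \<le> sum f A + sum g A" unfolding n_def by (simp add: mult.commute)
  moreover have "0 < 2 * q * n" using n assms(3) by simp
  ultimately have pos: "sum f A + sum g A > 0" by linarith
  have "\<bar>sum f A / (sum f A + sum g A) - 1 / 2\<bar> = \<bar>sum f A - sum g A\<bar> / (2 * (sum f A + sum g A))"
    using pos by (simp add: field_simps abs_div)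
  also have "\<dots> \<le> n / (2 * (2 * q * n))"
    using diff total pos n assms(3) by (intro frac_le) auto
  also have "\<dots> = 1 / (4 * q)" using n by (simp add: field_simps)
  finally show ?thesis .
qed

locale weighted_split =
  fixes d :: nat and M :: "nat \<Rightarrow> real" and a b :: "nat \<Rightarrow> real"
  assumes weight_pos: "\<And>w. w < 2 ^ d \<Longrightarrow> 0 < M w"
    and lower_le_upper: "\<forall>j\<in>{1..d}. a j \<le> b j"
begin

definition class_weight :: "nat \<Rightarrow> nat \<Rightarrow> real" where
  "class_weight j v = (\<Sum>w\<in>bit_class d j v. M w)"

definition low_weight :: "nat \<Rightarrow> nat \<Rightarrow> real" where
  "low_weight j v = (\<Sum>w\<in>bit_class d j v \<inter> {w. eps j w = 0}. M w)"

definition cut :: "nat \<Rightarrow> nat \<Rightarrow> real" where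
  "cut j v = a j + (b j - a j) * (low_weight j v / class_weight j v)"

definition child_lo :: "nat \<Rightarrow> nat \<Rightarrow> real" where
  "child_lo v j = (if eps j v = 0 then a j else cut j v)"

definition child_hi :: "nat \<Rightarrow> nat \<Rightarrow> real" where
  "child_hi v j = (if eps j v = 0 then cut j v else b j)"

lemma total_weight_pos: "0 < (\<Sum>w<2 ^ d. M w)"
  using weight_pos by (intro sum_pos) (auto simp: lessThan_empty_iff)

lemma class_weight_pos:
  assumes "v < 2 ^ d"
  shows "0 < class_weight j v"
proof -
  have "M v \<le> class_weight j v"
    unfolding class_weight_def using self_in_bit_class[OF assms] weight_pos
    by (intro member_le_sum) (auto simp: bit_class_def less_imp_le)
  then show ?thesis using weight_pos[OF assms] by linarith
qed

lemma low_weight_bounds: "0 \<le> low_weight j v" "low_weight j v \<le> class_weight j v"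
proof -
  have "0 \<le> M w" if "w \<in> bit_class d j v" for w
    using that weight_pos by (simp add: bit_class_def less_imp_le)
  then show "0 \<le> low_weight j v" "low_weight j v \<le> class_weight j v"
    unfolding low_weight_def class_weight_def by (auto intro: sum_nonneg sum_mono2)
qed

lemma class_weight_Suc:
  assumes "j \<ge> 1"
  shows "class_weight (Suc j) v
         = (if eps j v = 0 then low_weight j v else class_weight j v - low_weight j v)"
proof -
  have "class_weight j v = low_weight j v + (\<Sum>w\<in>bit_class d j v - {w. eps j w = 0}. M w)"
    unfolding class_weight_def low_weight_def by (rule sum.Int_Diff[OF finite_bit_class])
  moreover have "bit_class d (Suc j) v = bit_class d j v - {w. eps j w = 0}" if "eps j v \<noteq> 0"
  proof -
    have "eps j w = eps j v \<longleftrightarrow> eps j w \<noteq> 0" for w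
      using that eps_le_1[of j w] eps_le_1[of j v] by linarith
    then show ?thesis unfolding bit_class_Suc[OF assms] by auto
  qed
  ultimately show ?thesis
    unfolding class_weight_def low_weight_def bit_class_Suc[OF assms] by (auto intro!: sum.cong)
qed

lemma cut_bounds:
  assumes "v < 2 ^ d" "j \<in> {1..d}"
  shows "a j \<le> cut j v" "cut j v \<le> b j"
proof -
  have "0 < class_weight j v" using class_weight_pos[OF assms(1)] .
  then have r: "0 \<le> low_weight j v / class_weight j v" "low_weight j v / class_weight j v \<le> 1"
    using low_weight_bounds[of j v] by simp_all
  have ab: "0 \<le> b j - a j" using lower_le_upper assms(2) by auto
  have "0 \<le> (b j - a j) * (low_weight j v / class_weight j v)"
    "(b j - a j) * (low_weight j v / class_weight j v) \<le> b j - a j"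
    using mult_left_mono[OF r(2) ab] mult_nonneg_nonneg[OF ab r(1)] by simp_all
  then show "a j \<le> cut j v" "cut j v \<le> b j" unfolding cut_def by linarith+
qed

lemma child_bounds:
  assumes "v < 2 ^ d" "j \<in> {1..d}"
  shows "a j \<le> child_lo v j" "child_lo v j \<le> child_hi v j" "child_hi v j \<le> b j"
  using cut_bounds[OF assms] lower_le_upper assms(2) unfolding child_lo_def child_hi_def by auto

lemma child_subset: "v < 2 ^ d \<Longrightarrow> rect d (child_lo v) (child_hi v) \<subseteq> rect d a b"
  using child_bounds by (intro rect_mono) auto

lemma child_disjoint:
  assumes "v < 2 ^ d" "v' < 2 ^ d" "v \<noteq> v'"
  shows "rect d (child_lo v) (child_hi v) \<inter> rect d (child_lo v') (child_hi v') = {}"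
proof -
  let ?differ = "\<lambda>j. j \<in> {1..d} \<and> eps j v \<noteq> eps j v'"
  have "\<exists>j. ?differ j" using eps_eq_imp_eq[OF assms(1,2)] assms(3) by blast
  then obtain j where j: "?differ j" and below: "\<forall>i<j. \<not> ?differ i"
    unfolding exists_least_iff[of ?differ] by blast
  then have "bit_class d j v = bit_class d j v'" unfolding bit_class_def by auto
  then have same_cut: "cut j v = cut j v'" unfolding cut_def class_weight_def low_weight_def by simp
  have "eps j v = 0 \<and> eps j v' = 1 \<or> eps j v = 1 \<and> eps j v' = 0"
    using j eps_le_1[of j v] eps_le_1[of j v'] by linarith
  then show ?thesis
  proof
    assume "eps j v = 0 \<and> eps j v' = 1"
    then show ?thesis
      using j same_cut by (intro rect_disjoint[of j]) (auto simp: child_lo_def child_hi_def)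
  next
    assume "eps j v = 1 \<and> eps j v' = 0"
    then have "rect d (child_lo v') (child_hi v') \<inter> rect d (child_lo v) (child_hi v) = {}"
      using j same_cut by (intro rect_disjoint[of j]) (auto simp: child_lo_def child_hi_def)
    then show ?thesis by blast
  qed
qed

lemma child_side:
  assumes "v < 2 ^ d" "j \<in> {1..d}"
  shows "child_hi v j - child_lo v j = (b j - a j) * (class_weight (Suc j) v / class_weight j v)"
proof -
  have "class_weight j v \<noteq> 0" using class_weight_pos[OF assms(1), of j] by simp
  moreover have "j \<ge> 1" using assms(2) by simp
  ultimately show ?thesis
    unfolding child_lo_def child_hi_def cut_def class_weight_Suc[OF \<open>j \<ge> 1\<close>]
    by (auto simp: field_simps)
qed

lemma measure_child:
  assumes "v < 2 ^ d"
  shows "measure (lebd d) (rect d (child_lo v) (child_hi v))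
         = measure (lebd d) (rect d a b) * (M v / (\<Sum>w<2 ^ d. M w))"
proof -
  let ?ratio = "\<lambda>j. class_weight (Suc j) v / class_weight j v"
  have "(\<Prod>j\<in>{1..d}. ?ratio j) = (\<Prod>i<d. ?ratio (Suc i))"
    by (simp add: prod.atLeast1_atMost_eq)
  also have "\<dots> = class_weight (Suc d) v / class_weight 1 v"
    using class_weight_pos[OF assms] by (subst prod_lessThan_telescope) (auto simp: less_imp_neq[symmetric])
  also have "\<dots> = M v / (\<Sum>w<2 ^ d. M w)"
    unfolding class_weight_def bit_class_Suc_dim[OF assms] bit_class_1 by simp
  finally have ratio: "(\<Prod>j\<in>{1..d}. ?ratio j) = M v / (\<Sum>w<2 ^ d. M w)" .
  have "measure (lebd d) (rect d (child_lo v) (child_hi v))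
        = (\<Prod>j\<in>{1..d}. child_hi v j - child_lo v j)"
    using child_bounds[OF assms] by (intro measure_rect) auto
  also have "\<dots> = (\<Prod>j\<in>{1..d}. b j - a j) * (\<Prod>j\<in>{1..d}. ?ratio j)"
    using child_side[OF assms] by (simp add: prod.distrib[symmetric])
  finally show ?thesis unfolding ratio measure_rect[OF lower_le_upper] .
qed

lemma rect_Diff_children_null:
  "rect d a b - (\<Union>v<2 ^ d. rect d (child_lo v) (child_hi v)) \<in> null_sets (lebd d)"
proof (rule null_sets_Diff_UN_if_emeasure_eq)
  have ennreal_measure:
    "emeasure (lebd d) (rect d a' b') = ennreal (measure (lebd d) (rect d a' b'))"
    if "\<forall>j\<in>{1..d}. a' j \<le> b' j" for a' b'
    using emeasure_rect[OF that] measure_rect[OF that] by simp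
  have "(\<Sum>v<2 ^ d. emeasure (lebd d) (rect d (child_lo v) (child_hi v)))
        = (\<Sum>v<2 ^ d. ennreal (measure (lebd d) (rect d a b) * (M v / (\<Sum>w<2 ^ d. M w))))"
    using child_bounds measure_child by (intro sum.cong refl) (simp add: ennreal_measure)
  also have "\<dots> = ennreal (\<Sum>v<2 ^ d. measure (lebd d) (rect d a b) * (M v / (\<Sum>w<2 ^ d. M w)))"
    using weight_pos total_weight_pos by (intro sum_ennreal) (simp add: less_imp_le)
  also have "\<dots> = emeasure (lebd d) (rect d a b)"
    using total_weight_pos
    by (simp add: ennreal_measure[OF lower_le_upper] sum_distrib_left[symmetric]
        sum_divide_distrib[symmetric])
  finally show "emeasure (lebd d) (rect d a b)
      = (\<Sum>v<2 ^ d. emeasure (lebd d) (rect d (child_lo v) (child_hi v)))" ..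
  show "emeasure (lebd d) (rect d a b) < \<infinity>"
    using ennreal_measure[OF lower_le_upper] by simp
  show "disjoint_family_on (\<lambda>v. rect d (child_lo v) (child_hi v)) {..<2 ^ d}"
    using child_disjoint by (auto simp: disjoint_family_on_def)
  show "(\<Union>v<2 ^ d. rect d (child_lo v) (child_hi v)) \<subseteq> rect d a b"
    using child_subset by blast
qed auto

lemma children_Diff_rect_null:
  "(\<Union>v<2 ^ d. rect d (child_lo v) (child_hi v)) - rect d a b \<in> null_sets (lebd d)"
proof -
  have "(\<Union>v<2 ^ d. rect d (child_lo v) (child_hi v)) - rect d a b = {}"
    using child_subset by blast
  then show ?thesis by (metis null_sets.empty_sets)
qed

lemma cut_near_midpoint:
  assumes "q > 0" "\<And>w. w < 2 ^ d \<Longrightarrow> q \<le> M w \<and> M w \<le> q + 1" "v < 2 ^ d" "j \<in> {1..d}"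
  shows "\<bar>cut j v - (a j + b j) / 2\<bar> \<le> (b j - a j) / (4 * q)"
proof -
  let ?low = "bit_class d j v \<inter> {w. eps j w = 0}"
  have bij: "bij_betw (flip_bit (j - 1)) ?low (bit_class d j v - {w. eps j w = 0})"
    by (rule bij_betw_flip_bit_bit_class[OF assms(4)])
  have "class_weight j v = low_weight j v + (\<Sum>w\<in>bit_class d j v - {w. eps j w = 0}. M w)"
    unfolding class_weight_def low_weight_def by (rule sum.Int_Diff[OF finite_bit_class])
  also have "(\<Sum>w\<in>bit_class d j v - {w. eps j w = 0}. M w) = (\<Sum>w\<in>?low. M (flip_bit (j - 1) w))"
    using sum.reindex_bij_betw[OF bij, of M] by simp
  finally have split: "class_weight j v = low_weight j v + (\<Sum>w\<in>?low. M (flip_bit (j - 1) w))" .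
  have "v \<in> ?low \<or> flip_bit (j - 1) v \<in> ?low"
    using self_in_bit_class[OF assms(3)] flip_bit_in_bit_class[OF assms(4)] eps_flip_bit[of j]
      eps_le_1[of j v] assms(4) by auto
  then have "?low \<noteq> {}" by blast
  moreover have "w < 2 ^ d" "flip_bit (j - 1) w < 2 ^ d" if "w \<in> ?low" for w
    using that flip_bit_less_power[OF assms(4)] unfolding bit_class_def by auto
  ultimately have ratio: "\<bar>low_weight j v / class_weight j v - 1 / 2\<bar> \<le> 1 / (4 * q)"
    unfolding split low_weight_def using assms(1,2)
    by (intro sum_ratio_near_half) auto
  have "cut j v - (a j + b j) / 2 = (b j - a j) * (low_weight j v / class_weight j v - 1 / 2)"
    unfolding cut_def by (simp add: field_simps)
  moreover have ab: "0 \<le> b j - a j" using lower_le_upper assms(4) by auto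
  moreover have "(b j - a j) * \<bar>low_weight j v / class_weight j v - 1 / 2\<bar>
                 \<le> (b j - a j) * (1 / (4 * q))"
    by (rule mult_left_mono[OF ratio ab])
  ultimately show ?thesis by (simp add: abs_mult)
qed

lemma child_near_dyadic:
  assumes "q > 0" "\<And>w. w < 2 ^ d \<Longrightarrow> q \<le> M w \<and> M w \<le> q + 1" "v < 2 ^ d" "j \<in> {1..d}"
    and "\<bar>a j - A\<bar> \<le> S" "\<bar>b j - (A + 2 * h)\<bar> \<le> S" "h + S \<le> 2 * q * D"
  shows "\<bar>child_lo v j - (A + real (eps j v) * h)\<bar> \<le> S + D"
    "\<bar>child_hi v j - (A + real (eps j v) * h + h)\<bar> \<le> S + D"
proof -
  have "(b j - a j) / (4 * q) \<le> (2 * h + 2 * S) / (4 * q)"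
    using assms(1,5,6) by (intro divide_right_mono) auto
  also have "\<dots> \<le> D" using assms(1,7) by (simp add: pos_divide_le_eq mult_ac)
  finally have mid: "\<bar>cut j v - (a j + b j) / 2\<bar> \<le> D"
    using cut_near_midpoint[OF assms(1-4)] by linarith
  then have cut: "\<bar>cut j v - (A + h)\<bar> \<le> S + D"
    using assms(5,6) by (simp add: abs_le_iff field_simps)
  have "0 \<le> D" using mid by linarith
  moreover have "eps j v = 0 \<or> eps j v = 1" using eps_le_1[of j v] by auto
  ultimately show "\<bar>child_lo v j - (A + real (eps j v) * h)\<bar> \<le> S + D"
    "\<bar>child_hi v j - (A + real (eps j v) * h + h)\<bar> \<le> S + D"
    using assms(5,6) cut unfolding child_lo_def child_hi_def by (auto simp: add.assoc)
qed

end

lemma Ssum_Suc: "Ssum d N (Suc l) = Ssum d N l + Delta d N l"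
  unfolding Ssum_def by simp

lemma Ssum_le_Delta:
  assumes "d \<ge> 2"
  shows "Ssum d N l \<le> Delta d N l"
proof (induction l)
  case (Suc l)
  have "(2::real) ^ 1 \<le> 2 ^ (d - 1)" using assms by (intro power_increasing) auto
  then have "2 * Delta d N l \<le> 2 ^ (d - 1) * Delta d N l"
    using mult_right_mono[of 2 "2 ^ (d - 1)" "Delta d N l"] by (simp add: Delta_def)
  also have "\<dots> = Delta d N (Suc l)"
    unfolding Delta_def by (simp add: power_add mult_ac)
  finally have "2 * Delta d N l \<le> Delta d N (Suc l)" .
  then show ?case using Suc by (simp add: Ssum_Suc)
qed (simp add: Ssum_def Delta_def)

lemma inverse_power_le_Delta:
  assumes "d \<ge> 2" "N > 0"
  shows "1 / 2 ^ Suc l \<le> real N / real (base d ^ Suc l) * Delta d N l"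
proof -
  have "d * Suc l \<le> (2 * d - 3) + l * (d - 1) + Suc l"
    using assms(1) by (cases d) (auto simp: algebra_simps)
  then have "(2::real) ^ (d * Suc l) \<le> 2 ^ ((2 * d - 3) + l * (d - 1) + Suc l)"
    by (intro power_increasing) auto
  moreover have "real (base d ^ Suc l) = 2 ^ (d * Suc l)"
    unfolding base_def by (simp add: power_add power_mult)
  ultimately show ?thesis
    using assms(2) unfolding Delta_def by (simp add: power_add field_simps)
qed

lemma half_side_Ssum_le_Delta:
  assumes "d \<ge> 2" "base d ^ (l + 2) < N"
  shows "1 / 2 ^ Suc l + Ssum d N l \<le> 2 * real (N div base d ^ Suc l) * Delta d N l"
proof -
  define P where "P = base d ^ Suc l"
  define y where "y = real N / real P"
  have P: "P > 0" unfolding P_def base_def by simp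
  have "4 \<le> base d" unfolding base_def using power_increasing[of 2 d "2::nat"] assms(1) by simp
  then have "4 * P \<le> base d * P" by (rule mult_le_mono1)
  also have "\<dots> < N" using assms(2) unfolding P_def by (simp add: power_Suc)
  finally have "real (4 * P) \<le> real N" by (simp only: of_nat_le_iff less_imp_le)
  then have y4: "4 \<le> y" unfolding y_def using P by (simp add: field_simps)
  have "N < (N div P + 1) * P" using div_less_iff_less_mult[OF P, of N "N div P + 1"] by simp
  then have "real N < real ((N div P + 1) * P)" by (simp only: of_nat_less_iff)
  then have q: "y - 1 \<le> real (N div P)" unfolding y_def using P by (simp add: field_simps)
  have D: "0 \<le> Delta d N l" unfolding Delta_def by simp
  have "1 / 2 ^ Suc l \<le> y * Delta d N l"
    using inverse_power_le_Delta[OF assms(1)] assms(2) unfolding y_def P_def by simp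
  moreover have "Ssum d N l \<le> Delta d N l" by (rule Ssum_le_Delta[OF assms(1)])
  moreover have "y * Delta d N l + Delta d N l \<le> 2 * (y - 1) * Delta d N l"
    using y4 D by (simp add: algebra_simps mult_right_mono)
  moreover have "2 * (y - 1) * Delta d N l \<le> 2 * real (N div P) * Delta d N l"
    using q D by (simp add: mult_right_mono)
  ultimately show ?thesis unfolding P_def by linarith
qed

lemma power_less_if_less_Lnum: "k < Lnum d N \<Longrightarrow> base d ^ k < N"
  using not_less_Least[of k "\<lambda>k. N \<le> base d ^ k"] unfolding Lnum_def by (simp only: not_le)

lemma base_le_div_power: "base d ^ (l + 2) < N \<Longrightarrow> base d \<le> N div base d ^ Suc l"
  unfolding base_def by (simp add: less_eq_div_iff_mult_less_eq mult.commute less_imp_le)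

lemma corner_snoc: "corner (u @ [v]) j = corner u j + real (eps j v) / 2 ^ Suc (length u)"
  unfolding corner_def by (simp add: nth_append)

theorem lemma2p8:
  fixes d N l :: nat and u :: "nat list" and a b :: "nat \<Rightarrow> real"
  assumes "d \<ge> 2"
    and "Lnum d N \<ge> 3"
    and "l \<le> Lnum d N - 3"
    and "length u = l" and "\<forall>i<l. u ! i < base d"
    and "\<forall>j\<in>{1..d}. a j \<le> b j"
    and "measure (lebd d) (rect d a b) = real (Mcount d N u) / real N"
    and "\<forall>j\<in>{1..d}. \<bar>a j - corner u j\<bar> \<le> Ssum d N l
                 \<and> \<bar>b j - (corner u j + 1 / 2 ^ l)\<bar> \<le> Ssum d N l"
  shows "\<exists>a' b' :: nat \<Rightarrow> nat \<Rightarrow> real.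
     (\<forall>v<base d. \<forall>j\<in>{1..d}. a' v j \<le> b' v j)
   \<and> (\<forall>v<base d. \<forall>v'<base d. v \<noteq> v' \<longrightarrow>
          rect d (a' v) (b' v) \<inter> rect d (a' v') (b' v') \<in> null_sets (lebd d))
   \<and> rect d a b - (\<Union>v<base d. rect d (a' v) (b' v)) \<in> null_sets (lebd d)
   \<and> (\<Union>v<base d. rect d (a' v) (b' v)) - rect d a b \<in> null_sets (lebd d)
   \<and> (\<forall>v<base d. measure (lebd d) (rect d (a' v) (b' v))
                  = real (Mcount d N (u @ [v])) / real N)
   \<and> (\<forall>v<base d. \<forall>j\<in>{1..d}.
        \<bar>a' v j - corner (u @ [v]) j\<bar> \<le> Ssum d N (Suc l)
      \<and> \<bar>b' v j - (corner (u @ [v]) j + 1 / 2 ^ Suc l)\<bar> \<le> Ssum d N (Suc l))"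
proof -
  let ?M = "\<lambda>v. real (Mcount d N (u @ [v]))"
  define q where "q = real (N div base d ^ Suc l)"
  have d1: "d \<ge> 1" and u_digits: "\<forall>i<length u. u ! i < base d" using assms(1,4,5) by simp_all
  have level: "base d ^ (l + 2) < N" using assms(2,3) by (intro power_less_if_less_Lnum) linarith
  have weights: "q \<le> ?M w \<and> ?M w \<le> q + 1" if "w < 2 ^ d" for w
    using Mcount_snoc_bounds[OF d1 u_digits, of w N] that assms(4) by (simp add: q_def base_def)
  have "0 < N div base d ^ Suc l" using base_le_div_power[OF level] base_ge_2[OF d1] by linarith
  then have q_pos: "q > 0" unfolding q_def by simp
  interpret weighted_split d ?M a b
    using weights q_pos assms(6) by unfold_locales (fastforce simp: less_le_trans)+
  have volumes: "measure (lebd d) (rect d (child_lo v) (child_hi v)) = ?M v / real N"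
    if "v < 2 ^ d" for v
    using measure_child[OF that] assms(7) total_weight_pos Mcount_eq_sum_snoc[OF d1 u_digits]
    by (simp add: base_def)
  have near: "\<bar>child_lo v j - corner (u @ [v]) j\<bar> \<le> Ssum d N (Suc l)
      \<and> \<bar>child_hi v j - (corner (u @ [v]) j + 1 / 2 ^ Suc l)\<bar> \<le> Ssum d N (Suc l)"
    if "v < 2 ^ d" "j \<in> {1..d}" for v j
    using child_near_dyadic[OF q_pos weights that, of "corner u j" "Ssum d N l" "1 / 2 ^ Suc l"]
      half_side_Ssum_le_Delta[OF assms(1) level] assms(4,8) that
    by (simp add: q_def corner_snoc Ssum_Suc)
  show ?thesis
    unfolding base_def
    by (rule exI[of _ child_lo], rule exI[of _ child_hi])
      (use child_bounds child_disjoint rect_Diff_children_null children_Diff_rect_null volumes near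
        in auto)
qed

end
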